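(* Let $P$ be a finite poset in which every element covers at most two elements and is covered by at most two elements. Let $f\colon\mathcal{J}(P)\to\mathbb{R}$ be of the form $f=\sum_{p\in P}(a_pT_p^++a_p'T_p^-+a_p''\mathbb{1}_p)$ with $a_p,a_p',a_p''\in\mathbb{R}$. Fix parameters $\alpha^{\mathrm{PL}},\omega^{\mathrm{PL}}\in\mathbb{R}$ and $\alpha^{\mathrm{B}},\omega^{\mathrm{B}}\in\mathbb{R}_{>0}$, and set \[f^{\mathrm{PL}}\coloneqq\sum_{p\in P}(a_pT_p^{\mathrm{PL}+}+a_p'T_p^{\mathrm{PL}-}+a_p''\mathbb{1}_p^{\mathrm{PL}})\colon\mathbb{R}^P\to\mathbb{R},\qquad f^{\mathrm{B}}\coloneqq\prod_{p\in P}(T_p^{\mathrm{B}+})^{a_p}(T_p^{\mathrm{B}-})^{a_p'}(\mathbb{1}_p^{\mathrm{B}})^{a_p''}\colon\mathbb{R}_{>0}^P\to\mathbb{R}_{>0}.\] If $f=c$ (identically on $\mathcal{J}(P)$) for some $c\in\mathbb{R}$, then $f^{\mathrm{PL}}=c(\omega^{\mathrm{PL}}-\alpha^{\mathrm{PL}})$ identically on $\mathbb{R}^P$ and $f^{\mathrm{B}}=(\omega^{\mathrm{B}}/\alpha^{\mathrm{B}})^c$ identically on $\mathbb{R}_{>0}^P$.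
   Context: $\mathcal{J}(P)$ is the set of order ideals of $P$; for $p\in P$, $I\in\mathcal{J}(P)$: $\mathbb{1}_p(I)=1$ if $p\in I$, else $0$; $T_p^+(I)=1$ if $p$ is a minimal element of $P\setminus I$, else $0$; $T_p^-(I)=1$ if $p$ is a maximal element of $I$, else $0$. Let $\widehat P$ be $P$ with a new minimum $\hat0$ and a new maximum $\hat1$ adjoined; $\lessdot$ denotes the cover relation in $\widehat P$. Any $\pi\in\mathbb{R}^P$ is extended to $\widehat P$ by $\pi(\hat0)=\alpha^{\mathrm{PL}}$, $\pi(\hat1)=\omega^{\mathrm{PL}}$, and define $T_p^{\mathrm{PL}+}(\pi)=\pi(p)-\max\{\pi(r)\colon r\lessdot p\}$, $T_p^{\mathrm{PL}-}(\pi)=\min\{\pi(r)\colon p\lessdot r\}-\pi(p)$, $\mathbb{1}_p^{\mathrm{PL}}(\pi)=\omega^{\mathrm{PL}}-\pi(p)$. Any $\pi\in\mathbb{R}_{>0}^P$ is extended by $\pi(\hat0)=\alpha^{\mathrm{B}}$, $\pi(\hat1)=\omega^{\mathrm{B}}$, and define $T_p^{\mathrm{B}+}(\pi)=\pi(p)/\sum_{r\lessdot p}\pi(r)$, $T_p^{\mathrm{B}-}(\pi)=1/\big(\pi(p)\sum_{p\lessdot r}\pi(r)^{-1}\big)$, $\mathbb{1}_p^{\mathrm{B}}(\pi)=\omega^{\mathrm{B}}/\pi(p)$ (all covers taken in $\widehat P$). *)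

theory Defs
  imports Complex_Main
begin

text \<open>A finite poset is modelled as a finite subset P of a type with a partial order
  (the order of P is the restriction of the ambient order).\<close>

definition covers_in :: "'a::order set \<Rightarrow> 'a \<Rightarrow> 'a \<Rightarrow> bool" where
  "covers_in P q p \<longleftrightarrow> q \<in> P \<and> p \<in> P \<and> q < p \<and> \<not> (\<exists>r\<in>P. q < r \<and> r < p)"

definition order_ideals :: "'a::order set \<Rightarrow> 'a set set" where
  "order_ideals P = {I. I \<subseteq> P \<and> (\<forall>x\<in>I. \<forall>y\<in>P. y \<le> x \<longrightarrow> y \<in> I)}"

definition Tplus :: "'a::order set \<Rightarrow> 'a \<Rightarrow> 'a set \<Rightarrow> real" where
  "Tplus P p I = (if p \<in> P - I \<and> \<not> (\<exists>q\<in>P - I. q < p) then 1 else 0)"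

definition Tminus :: "'a::order set \<Rightarrow> 'a \<Rightarrow> 'a set \<Rightarrow> real" where
  "Tminus P p I = (if p \<in> I \<and> \<not> (\<exists>q\<in>I. p < q) then 1 else 0)"

definition ind :: "'a \<Rightarrow> 'a set \<Rightarrow> real" where
  "ind p I = (if p \<in> I then 1 else 0)"

datatype 'a ext = Bot | Elem 'a | Top

fun ext_le :: "'a::order ext \<Rightarrow> 'a ext \<Rightarrow> bool" where
  "ext_le Bot _ = True"
| "ext_le _ Top = True"
| "ext_le (Elem a) (Elem b) = (a \<le> b)"
| "ext_le _ _ = False"

definition ext_less :: "'a::order ext \<Rightarrow> 'a ext \<Rightarrow> bool" where
  "ext_less x y \<longleftrightarrow> ext_le x y \<and> x \<noteq> y"

definition hat :: "'a set \<Rightarrow> 'a ext set" where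
  "hat P = {Bot, Top} \<union> Elem ` P"

definition hcovers :: "'a::order set \<Rightarrow> 'a ext \<Rightarrow> 'a ext \<Rightarrow> bool" where
  "hcovers P x y \<longleftrightarrow> x \<in> hat P \<and> y \<in> hat P \<and> ext_less x y \<and>
     \<not> (\<exists>z\<in>hat P. ext_less x z \<and> ext_less z y)"

fun ext_val :: "real \<Rightarrow> real \<Rightarrow> ('a \<Rightarrow> real) \<Rightarrow> 'a ext \<Rightarrow> real" where
  "ext_val \<alpha> \<omega> \<pi> Bot = \<alpha>"
| "ext_val \<alpha> \<omega> \<pi> Top = \<omega>"
| "ext_val \<alpha> \<omega> \<pi> (Elem p) = \<pi> p"

definition TPLplus :: "'a::order set \<Rightarrow> real \<Rightarrow> real \<Rightarrow> ('a \<Rightarrow> real) \<Rightarrow> 'a \<Rightarrow> real" where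
  "TPLplus P \<alpha> \<omega> \<pi> p = \<pi> p - Max {ext_val \<alpha> \<omega> \<pi> r | r. hcovers P r (Elem p)}"

definition TPLminus :: "'a::order set \<Rightarrow> real \<Rightarrow> real \<Rightarrow> ('a \<Rightarrow> real) \<Rightarrow> 'a \<Rightarrow> real" where
  "TPLminus P \<alpha> \<omega> \<pi> p = Min {ext_val \<alpha> \<omega> \<pi> r | r. hcovers P (Elem p) r} - \<pi> p"

definition indPL :: "real \<Rightarrow> ('a \<Rightarrow> real) \<Rightarrow> 'a \<Rightarrow> real" where
  "indPL \<omega> \<pi> p = \<omega> - \<pi> p"

definition TBplus :: "'a::order set \<Rightarrow> real \<Rightarrow> real \<Rightarrow> ('a \<Rightarrow> real) \<Rightarrow> 'a \<Rightarrow> real" where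
  "TBplus P \<alpha> \<omega> \<pi> p = \<pi> p / (\<Sum>r\<in>{r. hcovers P r (Elem p)}. ext_val \<alpha> \<omega> \<pi> r)"

definition TBminus :: "'a::order set \<Rightarrow> real \<Rightarrow> real \<Rightarrow> ('a \<Rightarrow> real) \<Rightarrow> 'a \<Rightarrow> real" where
  "TBminus P \<alpha> \<omega> \<pi> p =
     1 / (\<pi> p * (\<Sum>r\<in>{r. hcovers P (Elem p) r}. inverse (ext_val \<alpha> \<omega> \<pi> r)))"

definition indB :: "real \<Rightarrow> ('a \<Rightarrow> real) \<Rightarrow> 'a \<Rightarrow> real" where
  "indB \<omega> \<pi> p = \<omega> / \<pi> p"

end

theory Submission
  imports Defs
begin

(*
  All three functions are instances of one form G(l, n), linear in a valuation l of the
  extended poset \<widehat>P and in a value n(T) attached to every two-element set T of lower or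
  upper covers: T\<^sup>+\<^sub>p becomes l(p) minus the join of the lower covers of p, T\<^sup>-\<^sub>p the meet of
  the upper covers minus l(p), and 1\<^sub>p becomes l(\<hat>1) - l(p).  The join of a one-element
  set is the value of its element, the join of a pair T is n(T), and meets are determined
  by join + meet = sum, as for max/min, for "or"/"and" on {0, 1}, and for
  log(x + y) and -log(1/x + 1/y).  With l the indicator of the complement of an order
  ideal I (together with \<hat>1) and n(T) = [T meets it], G is the statistic f at I; with
  l = \<pi> and n = max it is f\<^sup>P\<^sup>L; with l = log \<pi> and n = log of sums it is log f\<^sup>B.

  A linear form is determined by its values on basis vectors.  Evaluating G at the
  indicators of the complements of suitable order ideals, where it equals c, shows by
  inclusion-exclusion that the basis values vanish at all pairs and at all elements of P,
  and that they are c at \<hat>1 and -c at \<hat>0.  Hence G(l, n) = c (l(\<hat>1) - l(\<hat>0)) for every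
  l and n.
*)

section \<open>Covers in the extended poset\<close>

lemma ext_less_simps [simp]:
  "ext_less (Elem a) (Elem b) \<longleftrightarrow> a < b"
  "ext_less Bot (Elem b)" "ext_less (Elem a) Top"
  "\<not> ext_less x Bot" "\<not> ext_less Top x"
  by (cases x; auto simp: ext_less_def less_le)+

lemma hat_eq: "hat P = insert Bot (insert Top (Elem ` P))"
  by (auto simp: hat_def)

lemma finite_hat: "finite P \<Longrightarrow> finite (hat P)"
  by (simp add: hat_eq)

lemma sum_hat:
  "finite P \<Longrightarrow> (\<Sum>x\<in>hat P. f x) = f Bot + f Top + (\<Sum>p\<in>P. f (Elem p))"
  by (simp add: hat_eq image_iff add.assoc sum.reindex inj_on_def)

definition lower_covers :: "'a::order set \<Rightarrow> 'a \<Rightarrow> 'a ext set" where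
  "lower_covers P p = {r. hcovers P r (Elem p)}"

definition upper_covers :: "'a::order set \<Rightarrow> 'a \<Rightarrow> 'a ext set" where
  "upper_covers P p = {r. hcovers P (Elem p) r}"

lemma Elem_in_lower_covers [simp]: "Elem q \<in> lower_covers P p \<longleftrightarrow> covers_in P q p"
  by (auto simp: lower_covers_def hcovers_def hat_def covers_in_def)

lemma Bot_in_lower_covers [simp]:
  "Bot \<in> lower_covers P p \<longleftrightarrow> p \<in> P \<and> (\<forall>q\<in>P. \<not> q < p)"
  by (auto simp: lower_covers_def hcovers_def hat_def)

lemma Top_notin_lower_covers [simp]: "Top \<notin> lower_covers P p"
  by (simp add: lower_covers_def hcovers_def)

lemma Elem_in_upper_covers [simp]: "Elem q \<in> upper_covers P p \<longleftrightarrow> covers_in P p q"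
  by (auto simp: upper_covers_def hcovers_def hat_def covers_in_def)

lemma Top_in_upper_covers [simp]:
  "Top \<in> upper_covers P p \<longleftrightarrow> p \<in> P \<and> (\<forall>q\<in>P. \<not> p < q)"
  by (auto simp: upper_covers_def hcovers_def hat_def)

lemma Bot_notin_upper_covers [simp]: "Bot \<notin> upper_covers P p"
  by (simp add: upper_covers_def hcovers_def)

lemma lower_covers_subset_hat: "lower_covers P p \<subseteq> hat P"
  by (auto simp: lower_covers_def hcovers_def)

lemma upper_covers_subset_hat: "upper_covers P p \<subseteq> hat P"
  by (auto simp: upper_covers_def hcovers_def)

lemma covers_in_antichain:
  "covers_in P r p \<Longrightarrow> covers_in P r' p \<Longrightarrow> r \<le> r' \<Longrightarrow> r = r'"
  "covers_in P p r \<Longrightarrow> covers_in P p r' \<Longrightarrow> r \<le> r' \<Longrightarrow> r = r'"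
  by (auto simp: covers_in_def order.order_iff_strict)

lemma exists_lower_cover_above:
  assumes "finite P" "q \<in> P" "p \<in> P" "q < p"
  shows "\<exists>r. covers_in P r p \<and> q \<le> r"
proof -
  obtain r where r: "r \<in> P" "r < p" "q \<le> r"
    and max: "\<And>x. x \<in> P \<Longrightarrow> x < p \<Longrightarrow> r \<le> x \<Longrightarrow> r = x"
    using finite_has_maximal2[of "{x\<in>P. x < p}" q] assms by auto
  have "covers_in P r p"
    using r assms(3) max unfolding covers_in_def
    by (metis order.strict_implies_order order.strict_iff_not)
  with r show ?thesis by blast
qed

lemma exists_upper_cover_below:
  assumes "finite P" "q \<in> P" "p \<in> P" "p < q"
  shows "\<exists>r. covers_in P p r \<and> r \<le> q"
proof -
  obtain r where r: "r \<in> P" "p < r" "r \<le> q"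
    and min: "\<And>x. x \<in> P \<Longrightarrow> p < x \<Longrightarrow> x \<le> r \<Longrightarrow> r = x"
    using finite_has_minimal2[of "{x\<in>P. p < x}" q] assms by auto
  have "covers_in P p r"
    using r assms(3) min unfolding covers_in_def
    by (metis order.strict_implies_order order.strict_iff_not)
  with r show ?thesis by blast
qed

section \<open>Order ideals and the complementary up-sets of the extended poset\<close>

definition up_set :: "'a set \<Rightarrow> 'a set \<Rightarrow> 'a ext set" where
  "up_set P I = insert Top (Elem ` (P - I))"

lemma Elem_in_up_set [simp]: "Elem r \<in> up_set P I \<longleftrightarrow> r \<in> P \<and> r \<notin> I"
  and Top_in_up_set [simp]: "Top \<in> up_set P I"
  and Bot_notin_up_set [simp]: "Bot \<notin> up_set P I"
  by (auto simp: up_set_def)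

lemma up_set_subset_hat: "up_set P I \<subseteq> hat P"
  by (auto simp: up_set_def hat_def)

lemma finite_up_set: "finite P \<Longrightarrow> finite (up_set P I)"
  by (simp add: up_set_def)

lemma up_set_Diff_singleton:
  "r \<in> P \<Longrightarrow> up_set P (I - {r}) = insert (Elem r) (up_set P I)"
  by (auto simp: up_set_def)

lemma order_ideals_strict_upper_complement: "{z\<in>P. \<forall>r\<in>R. \<not> r < z} \<in> order_ideals P"
  by (auto simp: order_ideals_def dest: order.strict_trans2)

lemma order_ideals_Diff_maximal:
  "I \<in> order_ideals P \<Longrightarrow> (\<forall>z\<in>I. \<not> r < z) \<Longrightarrow> I - {r} \<in> order_ideals P"
  by (auto simp: order_ideals_def order.order_iff_strict)

lemma lower_covers_meet_up_set:
  assumes "finite P" "I \<in> order_ideals P" "p \<in> P"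
  shows "lower_covers P p \<inter> up_set P I \<noteq> {} \<longleftrightarrow> (\<exists>q\<in>P - I. q < p)"
proof
  assume "lower_covers P p \<inter> up_set P I \<noteq> {}"
  then obtain x where "x \<in> lower_covers P p" "x \<in> up_set P I" by blast
  then show "\<exists>q\<in>P - I. q < p"
    by (cases x) (auto simp: covers_in_def)
next
  assume "\<exists>q\<in>P - I. q < p"
  then obtain q where q: "q \<in> P" "q \<notin> I" "q < p" by blast
  then obtain r where r: "covers_in P r p" "q \<le> r"
    using exists_lower_cover_above assms by blast
  then have "r \<notin> I"
    using q assms(2) by (auto simp: order_ideals_def covers_in_def)
  then have "Elem r \<in> lower_covers P p \<inter> up_set P I"
    using r by (simp add: covers_in_def)
  then show "lower_covers P p \<inter> up_set P I \<noteq> {}" by blast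
qed

lemma upper_covers_subset_up_set:
  assumes "finite P" "I \<in> order_ideals P" "p \<in> P"
  shows "upper_covers P p \<subseteq> up_set P I \<longleftrightarrow> (\<forall>q\<in>P. p < q \<longrightarrow> q \<notin> I)"
proof
  assume sub: "upper_covers P p \<subseteq> up_set P I"
  show "\<forall>q\<in>P. p < q \<longrightarrow> q \<notin> I"
  proof (intro ballI impI)
    fix q assume q: "q \<in> P" "p < q"
    then obtain r where r: "covers_in P p r" "r \<le> q"
      using exists_upper_cover_below assms by blast
    then have "r \<notin> I"
      using sub Elem_in_upper_covers by fastforce
    then show "q \<notin> I"
      using q r assms(2) by (auto simp: order_ideals_def covers_in_def)
  qed
next
  assume above: "\<forall>q\<in>P. p < q \<longrightarrow> q \<notin> I"
  show "upper_covers P p \<subseteq> up_set P I"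
  proof
    fix x assume "x \<in> upper_covers P p"
    with above show "x \<in> up_set P I"
      by (cases x) (auto simp: covers_in_def)
  qed
qed

section \<open>Joins and meets on sets of one or two elements\<close>

lemma card_1_or_2_cases [consumes 1, case_names singleton doubleton]:
  assumes "card S \<in> {1, 2}"
  obtains x where "S = {x}" | x y where "x \<noteq> y" "S = {x, y}"
  using assms by (auto simp: card_1_singleton_iff card_2_iff)

lemma sum_pos_card_1_or_2:
  fixes f :: "'b \<Rightarrow> real"
  assumes "card S \<in> {1, 2}" "\<And>x. x \<in> S \<Longrightarrow> f x > 0"
  shows "(\<Sum>x\<in>S. f x) > 0"
  using assms by (cases rule: card_1_or_2_cases) (simp_all add: add_pos_pos)

text \<open>Only sets with one or two elements matter; on all other sets the values are junk.\<close>

definition join_val :: "('b \<Rightarrow> real) \<Rightarrow> ('b set \<Rightarrow> real) \<Rightarrow> 'b set \<Rightarrow> real" where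
  "join_val l n S = (if card S = 2 then n S else l (the_elem S))"

definition meet_val :: "('b \<Rightarrow> real) \<Rightarrow> ('b set \<Rightarrow> real) \<Rightarrow> 'b set \<Rightarrow> real" where
  "meet_val l n S = (if card S = 2 then sum l S - n S else l (the_elem S))"

lemma join_val_singleton [simp]: "join_val l n {x} = l x"
  and meet_val_singleton [simp]: "meet_val l n {x} = l x"
  by (simp_all add: join_val_def meet_val_def)

lemma join_val_doubleton [simp]: "x \<noteq> y \<Longrightarrow> join_val l n {x, y} = n {x, y}"
  and meet_val_doubleton [simp]: "x \<noteq> y \<Longrightarrow> meet_val l n {x, y} = l x + l y - n {x, y}"
  by (simp_all add: join_val_def meet_val_def)

lemma join_val_eq:
  "card S \<in> {1, 2} \<Longrightarrow> (\<And>x. n {x} = l x) \<Longrightarrow> join_val l n S = n S"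
  by (cases rule: card_1_or_2_cases) auto

lemma join_meet_val_cong:
  assumes "card S \<in> {1, 2}" "\<And>x. x \<in> S \<Longrightarrow> l x = l' x" "card S = 2 \<Longrightarrow> n S = n' S"
  shows "join_val l n S = join_val l' n' S" "meet_val l n S = meet_val l' n' S"
  using assms by (cases rule: card_1_or_2_cases; simp)+

lemma join_val_add:
  "join_val (\<lambda>x. l x + l' x) (\<lambda>S. n S + n' S) S = join_val l n S + join_val l' n' S"
  and meet_val_add:
  "meet_val (\<lambda>x. l x + l' x) (\<lambda>S. n S + n' S) S = meet_val l n S + meet_val l' n' S"
  by (simp_all add: join_val_def meet_val_def sum.distrib)

lemma join_val_scale: "join_val (\<lambda>x. k * l x) (\<lambda>S. k * n S) S = k * join_val l n S"
  and meet_val_scale: "meet_val (\<lambda>x. k * l x) (\<lambda>S. k * n S) S = k * meet_val l n S"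
  by (simp_all add: join_val_def meet_val_def sum_distrib_left right_diff_distrib)

lemma meet_val_of_bool:
  "card S \<in> {1, 2} \<Longrightarrow>
     meet_val (\<lambda>x. of_bool (x \<in> A)) (\<lambda>S. of_bool (S \<inter> A \<noteq> {})) S = of_bool (S \<subseteq> A)"
  by (cases rule: card_1_or_2_cases) (auto simp: of_bool_def split: if_splits)

lemma meet_val_Max:
  "card S \<in> {1, 2} \<Longrightarrow> meet_val l (\<lambda>S. Max (l ` S)) S = Min (l ` S)"
  by (cases rule: card_1_or_2_cases) (auto simp: max_def min_def)

lemma meet_val_ln_sum:
  assumes "card S \<in> {1, 2}" "\<And>x. x \<in> S \<Longrightarrow> v x > 0"
  shows "meet_val (\<lambda>x. ln (v x)) (\<lambda>S. ln (\<Sum>x\<in>S. v x)) S = - ln (\<Sum>x\<in>S. inverse (v x))"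
  using assms(1)
proof (cases rule: card_1_or_2_cases)
  case (singleton x)
  then show ?thesis by (simp add: ln_inverse)
next
  case (doubleton x y)
  with assms(2) have pos: "v x > 0" "v y > 0" by auto
  then have "inverse (v x) + inverse (v y) = (v x + v y) / (v x * v y)"
    by (simp add: field_simps)
  with pos doubleton show ?thesis
    by (simp add: ln_div ln_mult)
qed

lemma hits_inclusion_exclusion:
  assumes "x \<notin> A" "y \<notin> A" "x \<noteq> y" "card T = 2"
  shows "of_bool (T \<inter> insert x (insert y A) \<noteq> {}) - of_bool (T \<inter> insert x A \<noteq> {})
       - of_bool (T \<inter> insert y A \<noteq> {}) + of_bool (T \<inter> A \<noteq> {})
       = - (of_bool (T = {x, y}) :: real)"
  using assms by (auto simp: card_2_iff doubleton_eq_iff)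

section \<open>The linear form\<close>

lemma linear_functional_expansion:
  fixes \<Phi> :: "('b \<Rightarrow> real) \<Rightarrow> real"
  assumes "finite A"
    and add: "\<And>f g. \<Phi> (\<lambda>x. f x + g x) = \<Phi> f + \<Phi> g"
    and scale: "\<And>k f. \<Phi> (\<lambda>x. k * f x) = k * \<Phi> f"
    and determined: "\<And>f g. (\<And>x. x \<in> A \<Longrightarrow> f x = g x) \<Longrightarrow> \<Phi> f = \<Phi> g"
  shows "\<Phi> f = (\<Sum>x\<in>A. f x * \<Phi> (\<lambda>y. of_bool (y = x)))"
proof -
  have \<Phi>_sum: "\<Phi> (\<lambda>y. \<Sum>x\<in>B. g x y) = (\<Sum>x\<in>B. \<Phi> (g x))" if "finite B" for B g
    using that
  proof (induction B rule: finite_induct)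
    case empty
    show ?case using scale[of 0] by simp
  next
    case (insert x B)
    then show ?case using add[of "g x"] by simp
  qed
  have "\<Phi> f = \<Phi> (\<lambda>y. \<Sum>x\<in>A. f x * of_bool (y = x))"
    using \<open>finite A\<close> by (intro determined) (simp add: sum.remove)
  also have "\<dots> = (\<Sum>x\<in>A. f x * \<Phi> (\<lambda>y. of_bool (y = x)))"
    unfolding \<Phi>_sum[OF \<open>finite A\<close>] scale ..
  finally show ?thesis .
qed

definition cover_form ::
  "'a::order set \<Rightarrow> ('a \<Rightarrow> real) \<Rightarrow> ('a \<Rightarrow> real) \<Rightarrow> ('a \<Rightarrow> real)
     \<Rightarrow> ('a ext \<Rightarrow> real) \<Rightarrow> ('a ext set \<Rightarrow> real) \<Rightarrow> real" where
  "cover_form P a a' a'' l n = (\<Sum>p\<in>P.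
       a p * (l (Elem p) - join_val l n (lower_covers P p))
     + a' p * (meet_val l n (upper_covers P p) - l (Elem p))
     + a'' p * (l Top - l (Elem p)))"

lemma cover_form_add:
  "cover_form P a a' a'' (\<lambda>x. l x + l' x) (\<lambda>S. n S + n' S)
     = cover_form P a a' a'' l n + cover_form P a a' a'' l' n'"
  by (simp add: cover_form_def join_val_add meet_val_add sum.distrib[symmetric] algebra_simps)

lemma cover_form_scale:
  "cover_form P a a' a'' (\<lambda>x. k * l x) (\<lambda>S. k * n S) = k * cover_form P a a' a'' l n"
  by (simp add: cover_form_def join_val_scale meet_val_scale sum_distrib_left algebra_simps)

locale degree_two_poset =
  fixes P :: "'a::order set"
  assumes finite_P: "finite P"
    and lower_degree: "\<forall>p\<in>P. card {q\<in>P. covers_in P q p} \<le> 2"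
    and upper_degree: "\<forall>p\<in>P. card {q\<in>P. covers_in P p q} \<le> 2"
begin

lemma card_lower_covers:
  assumes p: "p \<in> P"
  shows "card (lower_covers P p) \<in> {1, 2}"
proof (cases "\<exists>q\<in>P. q < p")
  case True
  define C where "C = {q\<in>P. covers_in P q p}"
  have "C \<noteq> {}"
    using True exists_lower_cover_above[OF finite_P _ p] by (auto simp: C_def covers_in_def)
  then have "card C \<noteq> 0"
    using finite_P by (simp add: C_def)
  moreover have "lower_covers P p = Elem ` C"
    using True by (auto simp: C_def lower_covers_def hcovers_def hat_def covers_in_def)
  ultimately show ?thesis
    using lower_degree p by (auto simp: card_image inj_on_def C_def)
next
  case False
  then have "lower_covers P p = {Bot}"
    using p by (auto simp: lower_covers_def hcovers_def hat_def)
  then show ?thesis by simp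
qed

lemma card_upper_covers:
  assumes p: "p \<in> P"
  shows "card (upper_covers P p) \<in> {1, 2}"
proof (cases "\<exists>q\<in>P. p < q")
  case True
  define C where "C = {q\<in>P. covers_in P p q}"
  have "C \<noteq> {}"
    using True exists_upper_cover_below[OF finite_P _ p] by (auto simp: C_def covers_in_def)
  then have "card C \<noteq> 0"
    using finite_P by (simp add: C_def)
  moreover have "upper_covers P p = Elem ` C"
    using True by (auto simp: C_def upper_covers_def hcovers_def hat_def covers_in_def)
  ultimately show ?thesis
    using upper_degree p by (auto simp: card_image inj_on_def C_def)
next
  case False
  then have "upper_covers P p = {Top}"
    using p by (auto simp: upper_covers_def hcovers_def hat_def)
  then show ?thesis by simp
qed

definition cover_pairs :: "'a ext set set" where
  "cover_pairs = {T. card T = 2 \<and> (\<exists>p\<in>P. T = lower_covers P p \<or> T = upper_covers P p)}"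

lemma finite_cover_pairs: "finite cover_pairs"
proof (rule finite_subset)
  show "cover_pairs \<subseteq> lower_covers P ` P \<union> upper_covers P ` P"
    by (auto simp: cover_pairs_def)
qed (use finite_P in simp)

lemma cover_pairs_incomparable:
  assumes "T \<in> cover_pairs"
  obtains r r' where "T = {Elem r, Elem r'}" "r \<in> P" "r' \<in> P" "\<not> r \<le> r'" "\<not> r' \<le> r"
proof -
  obtain x y p where xy: "x \<noteq> y" "T = {x, y}" "p \<in> P"
    and "T = lower_covers P p \<or> T = upper_covers P p"
    using assms by (auto simp: cover_pairs_def card_2_iff)
  then have "x \<in> lower_covers P p \<and> y \<in> lower_covers P p
      \<or> x \<in> upper_covers P p \<and> y \<in> upper_covers P p"
    by auto
  then obtain r r' where "x = Elem r" "y = Elem r'"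
    "covers_in P r p \<and> covers_in P r' p \<or> covers_in P p r \<and> covers_in P p r'"
    using xy(1) by (cases x; cases y) (auto simp: covers_in_def)
  with xy that show thesis
    using covers_in_antichain by (metis covers_in_def)
qed

lemma cover_form_cong:
  assumes "\<And>x. x \<in> hat P \<Longrightarrow> l x = l' x" "\<And>T. T \<in> cover_pairs \<Longrightarrow> n T = n' T"
  shows "cover_form P a a' a'' l n = cover_form P a a' a'' l' n'"
proof -
  have "join_val l n (lower_covers P p) = join_val l' n' (lower_covers P p)"
    "meet_val l n (upper_covers P p) = meet_val l' n' (upper_covers P p)"
    "l (Elem p) = l' (Elem p)" "l Top = l' Top" if p: "p \<in> P" for p
  proof -
    show "join_val l n (lower_covers P p) = join_val l' n' (lower_covers P p)"
      using card_lower_covers[OF p] lower_covers_subset_hat p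
      by (intro join_meet_val_cong) (auto intro!: assms simp: cover_pairs_def)
    show "meet_val l n (upper_covers P p) = meet_val l' n' (upper_covers P p)"
      using card_upper_covers[OF p] upper_covers_subset_hat p
      by (intro join_meet_val_cong) (auto intro!: assms simp: cover_pairs_def)
  qed (use p assms in \<open>auto simp: hat_def\<close>)
  then show ?thesis
    unfolding cover_form_def by (intro sum.cong) auto
qed

lemma cover_form_expansion:
  "cover_form P a a' a'' l n =
     (\<Sum>x\<in>hat P. l x * cover_form P a a' a'' (\<lambda>y. of_bool (y = x)) (\<lambda>_. 0))
   + (\<Sum>T\<in>cover_pairs. n T * cover_form P a a' a'' (\<lambda>_. 0) (\<lambda>S. of_bool (S = T)))"
proof -
  let ?G = "cover_form P a a' a''"
  have "?G l n = ?G l (\<lambda>_. 0) + ?G (\<lambda>_. 0) n"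
    using cover_form_add[of P a a' a'' l "\<lambda>_. 0" "\<lambda>_. 0" n] by simp
  also have "?G l (\<lambda>_. 0) = (\<Sum>x\<in>hat P. l x * ?G (\<lambda>y. of_bool (y = x)) (\<lambda>_. 0))"
    using finite_hat[OF finite_P]
    by (intro linear_functional_expansion[where \<Phi> = "\<lambda>l. ?G l (\<lambda>_. 0)"])
      (auto intro: cover_form_cong simp: cover_form_scale[of P a a' a'' _ _ "\<lambda>_. 0", simplified]
        cover_form_add[of P a a' a'' _ _ "\<lambda>_. 0" "\<lambda>_. 0", simplified])
  also have "?G (\<lambda>_. 0) n = (\<Sum>T\<in>cover_pairs. n T * ?G (\<lambda>_. 0) (\<lambda>S. of_bool (S = T)))"
    using finite_cover_pairs
    by (intro linear_functional_expansion[where \<Phi> = "?G (\<lambda>_. 0)"])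
      (auto intro: cover_form_cong simp: cover_form_scale[of P a a' a'' _ "\<lambda>_. 0", simplified]
        cover_form_add[of P a a' a'' "\<lambda>_. 0" "\<lambda>_. 0", simplified])
  finally show ?thesis .
qed

lemma cover_form_one: "cover_form P a a' a'' (\<lambda>_. 1) (\<lambda>_. 1) = 0"
proof -
  have "meet_val (\<lambda>_. 1) (\<lambda>_. 1) (upper_covers P p) = 1" if "p \<in> P" for p
    using card_upper_covers[OF that] by (cases rule: card_1_or_2_cases) auto
  moreover have "join_val (\<lambda>_. 1) (\<lambda>_. 1) S = 1" for S :: "'a ext set"
    by (simp add: join_val_def)
  ultimately show ?thesis
    by (simp add: cover_form_def)
qed

lemma cover_form_up_set:
  assumes I: "I \<in> order_ideals P"
  shows "cover_form P a a' a'' (\<lambda>x. of_bool (x \<in> up_set P I))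
           (\<lambda>S. of_bool (S \<inter> up_set P I \<noteq> {}))
       = (\<Sum>p\<in>P. a p * Tplus P p I + a' p * Tminus P p I + a'' p * ind p I)"
proof -
  let ?l = "\<lambda>x. of_bool (x \<in> up_set P I)" and ?n = "\<lambda>S. of_bool (S \<inter> up_set P I \<noteq> {})"
  have ideal: "q \<in> I" if "q \<in> P" "q < r" "r \<in> I" for q r
    using I that by (auto simp: order_ideals_def)
  have "Tplus P p I = ?l (Elem p) - join_val ?l ?n (lower_covers P p)"
    "Tminus P p I = meet_val ?l ?n (upper_covers P p) - ?l (Elem p)" if p: "p \<in> P" for p
    using p card_lower_covers[OF p] card_upper_covers[OF p] I
    by (auto simp: Tplus_def Tminus_def join_val_eq meet_val_of_bool order_ideals_def
        lower_covers_meet_up_set[OF finite_P I p] upper_covers_subset_up_set[OF finite_P I p]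
        dest: ideal)
  moreover have "ind p I = ?l Top - ?l (Elem p)" if "p \<in> P" for p
    using that by (simp add: ind_def)
  ultimately show ?thesis
    unfolding cover_form_def by (intro sum.cong) auto
qed

lemma TPL_sum_eq_cover_form:
  "(\<Sum>p\<in>P. a p * TPLplus P \<alpha> \<omega> \<pi> p + a' p * TPLminus P \<alpha> \<omega> \<pi> p + a'' p * indPL \<omega> \<pi> p)
     = cover_form P a a' a'' (ext_val \<alpha> \<omega> \<pi>) (\<lambda>S. Max (ext_val \<alpha> \<omega> \<pi> ` S))"
proof -
  have covers:
    "{ext_val \<alpha> \<omega> \<pi> r | r. hcovers P r (Elem p)} = ext_val \<alpha> \<omega> \<pi> ` lower_covers P p"
    "{ext_val \<alpha> \<omega> \<pi> r | r. hcovers P (Elem p) r} = ext_val \<alpha> \<omega> \<pi> ` upper_covers P p" for p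
    by (auto simp: lower_covers_def upper_covers_def)
  show ?thesis
    unfolding cover_form_def TPLplus_def TPLminus_def indPL_def covers
    using card_lower_covers card_upper_covers
    by (intro sum.cong refl) (simp add: join_val_eq meet_val_Max)
qed

lemma TB_prod_eq_exp_cover_form:
  assumes "\<alpha> > 0" "\<omega> > 0" "\<forall>p\<in>P. \<pi> p > 0"
  shows "(\<Prod>p\<in>P. TBplus P \<alpha> \<omega> \<pi> p powr a p * TBminus P \<alpha> \<omega> \<pi> p powr a' p
                    * indB \<omega> \<pi> p powr a'' p)
     = exp (cover_form P a a' a'' (\<lambda>x. ln (ext_val \<alpha> \<omega> \<pi> x))
              (\<lambda>S. ln (\<Sum>x\<in>S. ext_val \<alpha> \<omega> \<pi> x)))"
proof -
  define v where "v = ext_val \<alpha> \<omega> \<pi>"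
  define l where "l = (\<lambda>x. ln (v x))"
  define n where "n = (\<lambda>S. ln (\<Sum>x\<in>S. v x))"
  have v_pos: "v x > 0" if "x \<in> hat P" for x
    using that assms by (auto simp: v_def hat_def)
  have "TBplus P \<alpha> \<omega> \<pi> p powr a p * TBminus P \<alpha> \<omega> \<pi> p powr a' p * indB \<omega> \<pi> p powr a'' p
     = exp (a p * (l (Elem p) - join_val l n (lower_covers P p))
          + a' p * (meet_val l n (upper_covers P p) - l (Elem p)) + a'' p * (l Top - l (Elem p)))"
    if p: "p \<in> P" for p
  proof -
    have \<pi>_pos: "\<pi> p > 0" "v (Elem p) = \<pi> p" "v Top = \<omega>"
      using p assms by (simp_all add: v_def)
    have card: "card (lower_covers P p) \<in> {1, 2}" "card (upper_covers P p) \<in> {1, 2}"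
      using card_lower_covers card_upper_covers p by auto
    have covers_pos: "v x > 0" if "x \<in> lower_covers P p \<union> upper_covers P p" for x
      using that v_pos lower_covers_subset_hat upper_covers_subset_hat by blast
    have pos: "(\<Sum>x\<in>lower_covers P p. v x) > 0"
      "(\<Sum>x\<in>upper_covers P p. inverse (v x)) > 0"
      using card covers_pos by (auto intro!: sum_pos_card_1_or_2)
    have "TBplus P \<alpha> \<omega> \<pi> p = \<pi> p / (\<Sum>x\<in>lower_covers P p. v x)"
      "TBminus P \<alpha> \<omega> \<pi> p = 1 / (\<pi> p * (\<Sum>x\<in>upper_covers P p. inverse (v x)))"
      "indB \<omega> \<pi> p = \<omega> / \<pi> p"
      by (simp_all add: TBplus_def TBminus_def indB_def lower_covers_def upper_covers_def v_def)
    moreover have "join_val l n (lower_covers P p) = ln (\<Sum>x\<in>lower_covers P p. v x)"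
      using card by (simp add: join_val_eq l_def n_def)
    moreover have "meet_val l n (upper_covers P p)
        = - ln (\<Sum>x\<in>upper_covers P p. inverse (v x))"
      unfolding l_def n_def using card covers_pos by (intro meet_val_ln_sum) auto
    ultimately show ?thesis
      using \<pi>_pos pos assms
      by (simp add: powr_def exp_add[symmetric] ln_div ln_mult l_def algebra_simps)
  qed
  then show ?thesis
    by (simp add: cover_form_def exp_sum finite_P v_def l_def n_def)
qed

end

section \<open>Statistics that are constant on order ideals\<close>

locale constant_on_ideals = degree_two_poset P for P :: "'a::order set" +
  fixes a a' a'' :: "'a \<Rightarrow> real" and c :: real
  assumes statistic_constant: "\<forall>I\<in>order_ideals P.
    (\<Sum>p\<in>P. a p * Tplus P p I + a' p * Tminus P p I + a'' p * ind p I) = c"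
begin

abbreviation G :: "('a ext \<Rightarrow> real) \<Rightarrow> ('a ext set \<Rightarrow> real) \<Rightarrow> real" where
  "G \<equiv> cover_form P a a' a''"

definition point_value :: "'a ext \<Rightarrow> real" where
  "point_value x = G (\<lambda>y. of_bool (y = x)) (\<lambda>_. 0)"

definition pair_value :: "'a ext set \<Rightarrow> real" where
  "pair_value T = G (\<lambda>_. 0) (\<lambda>S. of_bool (S = T))"

lemma up_set_values_eq:
  assumes "I \<in> order_ideals P"
  shows "(\<Sum>x\<in>up_set P I. point_value x)
       + (\<Sum>T\<in>cover_pairs. of_bool (T \<inter> up_set P I \<noteq> {}) * pair_value T) = c"
proof -
  have "hat P \<inter> {x. x \<in> up_set P I} = up_set P I"
    using up_set_subset_hat by blast
  then show ?thesis
    using cover_form_expansion[of a a' a'' "\<lambda>x. of_bool (x \<in> up_set P I)"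
        "\<lambda>S. of_bool (S \<inter> up_set P I \<noteq> {})"]
      cover_form_up_set[OF assms] statistic_constant assms
    by (simp add: point_value_def pair_value_def finite_hat[OF finite_P])
qed

text \<open>Inclusion-exclusion over the ideal of all elements not strictly above \<open>r\<close> or \<open>r'\<close>
  and the three ideals obtained from it by removing \<open>r\<close>, \<open>r'\<close>, or both.\<close>

lemma pair_value_eq_0:
  assumes T: "T \<in> cover_pairs"
  shows "pair_value T = 0"
proof -
  obtain r r' where T_eq: "T = {Elem r, Elem r'}"
    and r: "r \<in> P" "r' \<in> P" "\<not> r \<le> r'" "\<not> r' \<le> r"
    using cover_pairs_incomparable[OF T] .
  define I where "I = {z\<in>P. \<forall>s\<in>{r, r'}. \<not> s < z}"
  define A where "A = up_set P I"
  define E where "E X = (\<Sum>x\<in>X. point_value x)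
     + (\<Sum>S\<in>cover_pairs. of_bool (S \<inter> X \<noteq> {}) * pair_value S)" for X
  have I: "I \<in> order_ideals P"
    unfolding I_def by (rule order_ideals_strict_upper_complement)
  have in_I: "r \<in> I" "r' \<in> I - {r}"
    using r by (auto simp: I_def less_le_not_le)
  have I_r: "I - {r} \<in> order_ideals P" and I_r': "I - {r'} \<in> order_ideals P"
    using I by (auto intro!: order_ideals_Diff_maximal simp: I_def)
  have I_rr': "I - {r} - {r'} \<in> order_ideals P"
    using I_r by (auto intro!: order_ideals_Diff_maximal simp: I_def)
  have notin_A: "Elem r \<notin> A" "Elem r' \<notin> A" "Elem r \<noteq> Elem r'"
    using in_I by (auto simp: A_def)
  have "E A = c" "E (insert (Elem r) A) = c" "E (insert (Elem r') A) = c"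
    "E (insert (Elem r) (insert (Elem r') A)) = c"
    using up_set_values_eq[OF I] up_set_values_eq[OF I_r] up_set_values_eq[OF I_r']
      up_set_values_eq[OF I_rr'] r
    by (simp_all add: E_def A_def up_set_Diff_singleton insert_commute)
  then have "0 = E (insert (Elem r) (insert (Elem r') A)) - E (insert (Elem r) A)
      - E (insert (Elem r') A) + E A"
    by simp
  also have "\<dots> = (\<Sum>S\<in>cover_pairs.
      (of_bool (S \<inter> insert (Elem r) (insert (Elem r') A) \<noteq> {})
      - of_bool (S \<inter> insert (Elem r) A \<noteq> {}) - of_bool (S \<inter> insert (Elem r') A \<noteq> {})
      + of_bool (S \<inter> A \<noteq> {})) * pair_value S)"
    using notin_A finite_up_set[OF finite_P]
    by (simp add: E_def A_def sum.distrib sum_subtractf algebra_simps)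
  also have "\<dots> = (\<Sum>S\<in>cover_pairs. - (of_bool (S = T) * pair_value S))"
    by (intro sum.cong refl, subst hits_inclusion_exclusion[OF notin_A])
      (simp_all add: T_eq cover_pairs_def)
  also have "\<dots> = - pair_value T"
    using T finite_cover_pairs by (simp add: sum_negf)
  finally show ?thesis by simp
qed

lemma cover_form_eq_sum_point_value: "G l n = (\<Sum>x\<in>hat P. l x * point_value x)"
  using cover_form_expansion[of a a' a'' l n]
  by (simp add: point_value_def pair_value_eq_0[unfolded pair_value_def])

lemma sum_point_value_up_set:
  "I \<in> order_ideals P \<Longrightarrow> (\<Sum>x\<in>up_set P I. point_value x) = c"
  using up_set_values_eq by (simp add: pair_value_eq_0)

lemma point_value_Elem:
  assumes q: "q \<in> P"
  shows "point_value (Elem q) = 0"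
proof -
  define I where "I = {z\<in>P. \<forall>s\<in>{q}. \<not> s < z}"
  have I: "I \<in> order_ideals P"
    unfolding I_def by (rule order_ideals_strict_upper_complement)
  have I_q: "I - {q} \<in> order_ideals P"
    using I by (auto intro!: order_ideals_Diff_maximal simp: I_def)
  have "Elem q \<notin> up_set P I"
    using q by (simp add: I_def)
  then show ?thesis
    using sum_point_value_up_set[OF I] sum_point_value_up_set[OF I_q] q
    by (simp add: up_set_Diff_singleton finite_up_set[OF finite_P])
qed

lemma point_value_Top: "point_value Top = c"
proof -
  have "up_set P P = {Top}"
    by (auto simp: up_set_def)
  moreover have "P \<in> order_ideals P"
    by (simp add: order_ideals_def)
  ultimately show ?thesis
    using sum_point_value_up_set by fastforce
qed

lemma point_value_Bot: "point_value Bot = - c"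
  using cover_form_eq_sum_point_value[of "\<lambda>_. 1" "\<lambda>_. 1"] cover_form_one[of a a' a'']
  by (simp add: sum_hat finite_P point_value_Top point_value_Elem)

lemma cover_form_eq: "G l n = c * (l Top - l Bot)"
  by (simp add: cover_form_eq_sum_point_value sum_hat finite_P point_value_Top point_value_Bot
      point_value_Elem algebra_simps)

end

theorem lemma4p9:
  fixes P :: "'a::order set"
    and a a' a'' :: "'a \<Rightarrow> real"
    and c \<alpha>PL \<omega>PL \<alpha>B \<omega>B :: real
  assumes finP: "finite P"
    and down2: "\<forall>p\<in>P. card {q\<in>P. covers_in P q p} \<le> 2"
    and up2: "\<forall>p\<in>P. card {q\<in>P. covers_in P p q} \<le> 2"
    and \<alpha>B_pos: "\<alpha>B > 0" and \<omega>B_pos: "\<omega>B > 0"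
    and const: "\<forall>I\<in>order_ideals P.
       (\<Sum>p\<in>P. a p * Tplus P p I + a' p * Tminus P p I + a'' p * ind p I) = c"
  shows "(\<forall>\<pi> :: 'a \<Rightarrow> real.
            (\<Sum>p\<in>P. a p * TPLplus P \<alpha>PL \<omega>PL \<pi> p + a' p * TPLminus P \<alpha>PL \<omega>PL \<pi> p
                     + a'' p * indPL \<omega>PL \<pi> p) = c * (\<omega>PL - \<alpha>PL))
       \<and> (\<forall>\<pi> :: 'a \<Rightarrow> real. (\<forall>p\<in>P. \<pi> p > 0) \<longrightarrow>
            (\<Prod>p\<in>P. TBplus P \<alpha>B \<omega>B \<pi> p powr a p * TBminus P \<alpha>B \<omega>B \<pi> p powr a' p
                     * indB \<omega>B \<pi> p powr a'' p) = (\<omega>B / \<alpha>B) powr c)"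
proof -
  interpret constant_on_ideals P a a' a'' c
    using finP down2 up2 const by unfold_locales
  have "exp (c * (ln \<omega>B - ln \<alpha>B)) = (\<omega>B / \<alpha>B) powr c"
    using \<alpha>B_pos \<omega>B_pos by (simp add: powr_def ln_div)
  then show ?thesis
    using TPL_sum_eq_cover_form TB_prod_eq_exp_cover_form[OF \<alpha>B_pos \<omega>B_pos]
    by (simp add: cover_form_eq)
qed

end
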